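(* Let $\mathbb C$ be an essentially algebraic category. Define $\mathcal C$ by $\mathrm{Ob}\,\mathcal C=\mathbb C_0$, $\mathrm{Hom}(a,b)$ the setoid of pairs $(f,r)$ with $f\in\mathbb C_1$ and $r$ a proof of $\mathsf{dom}(f)=a\wedge\mathsf{cod}(f)=b$, where $(f,r)\sim(f',r')$ iff $f=_{\mathbb C_1}f'$; transports $\mathrm{Hom}(p,q)(f,r)=(f,r')$; $\mathrm{id}_a=(\mathsf{id}(a),r)$; and $(g,r)\circ(f,s)=(\mathsf{cmp}(u),r')$ where $u\in\mathbb C_2$ is the unique element with $\mathsf{snd}(u)=g$, $\mathsf{fst}(u)=f$. Then $\mathcal C$ is an HF-category. Conversely, let $\mathcal C$ be an HF-category and define $\mathbb C_0=\mathrm{Ob}\,\mathcal C$; $\mathbb C_1$ the setoid of triples $(a,b,f)$ with $f\in\mathrm{Hom}(a,b)$, where $(a,b,f)\sim(a',b',f')$ iff $\exists p:a=a',\exists q:b=b'$ with $\mathrm{Hom}(p,q)(f)=f'$; $\mathsf{dom}(a,b,f)=a$, $\mathsf{cod}(a,b,f)=b$, $\mathsf{id}(a)=(a,a,\mathrm{id}_a)$; $\mathbb C_2$ the setoid of triples $(\mathbf f,\mathbf g,p)$ with $p:\mathsf{cod}(\mathbf f)=\mathsf{dom}(\mathbf g)$, equality being componentwise equality of $\mathbf f,\mathbf g$; $\mathsf{fst}(\mathbf f,\mathbf g,p)=\mathbf f$, $\mathsf{snd}(\mathbf f,\mathbf g,p)=\mathbf g$; and $\mathsf{cmp}((a,b,f),(c,d,g),p)=(a,d,g\circ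 T(p)\circ f)$ with $T(p)=\mathrm{Hom}(r(b),p)(\mathrm{id}_b)\in\mathrm{Hom}(b,c)$. Then $\mathbb C$ is an essentially algebraic category (satisfies A1–A9).
   Context: Setoids are types with equivalence relations; extensional functions respect them. An essentially algebraic category $\mathbb C$ consists of setoids $\mathbb C_0,\mathbb C_1,\mathbb C_2$ (objects, arrows, composable pairs) and extensional functions $\mathsf{id}:\mathbb C_0\to\mathbb C_1$, $\mathsf{dom},\mathsf{cod}:\mathbb C_1\to\mathbb C_0$, $\mathsf{cmp},\mathsf{fst},\mathsf{snd}:\mathbb C_2\to\mathbb C_1$ satisfying: A1 $\mathsf{dom}(\mathsf{id}(x))=x$; A2 $\mathsf{cod}(\mathsf{id}(x))=x$; A3 $\mathsf{dom}(\mathsf{cmp}(u))=\mathsf{dom}(\mathsf{fst}(u))$; A4 $\mathsf{cod}(\mathsf{cmp}(u))=\mathsf{cod}(\mathsf{snd}(u))$; A5 $\mathsf{fst}(u)=\mathsf{fst}(v)$, $\mathsf{snd}(u)=\mathsf{snd}(v)\Rightarrow u=v$; A6 $\mathsf{dom}(f)=\mathsf{cod}(g)\Rightarrow\exists u\in\mathbb C_2(\mathsf{snd}(u)=f\wedge\mathsf{fst}(u)=g)$; A7 $\mathsf{fst}(u)=\mathsf{id}(y)\Rightarrow\mathsf{cmp}(u)=\mathsf{snd}(u)$; A8 $\mathsf{snd}(u)=\mathsf{id}(x)\Rightarrow\mathsf{cmp}(u)=\mathsf{fst}(u)$; A9 if $\mathsf{fst}(w)=\mathsf{fst}(v)$,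 $\mathsf{snd}(v)=\mathsf{fst}(u)$, $\mathsf{snd}(u)=\mathsf{snd}(z)$, $\mathsf{snd}(w)=\mathsf{cmp}(u)$, $\mathsf{cmp}(v)=\mathsf{fst}(z)$ then $\mathsf{cmp}(w)=\mathsf{cmp}(z)$. A proof-irrelevant family $H$ of setoids over a setoid $X$: setoids $H(x)$ and extensional transports $H(p):H(x)\to H(y)$ for $p:x=_Xy$ with (F1) $H(\mathrm{refl}(x))=_{\rm ext}\mathrm{id}$, (F2) $H(p)=_{\rm ext}H(q)$ for all $p,q:x=_Xy$, (F3) $H(q)\circ H(p)=_{\rm ext}H(q\circ p)$. An HF-category consists of a setoid $\mathrm{Ob}$, a proof-irrelevant family $\mathrm{Hom}$ over $\mathrm{Ob}\times\mathrm{Ob}$ with transports $\mathrm{Hom}(p,q)$, identities $\mathrm{id}_a\in\mathrm{Hom}(a,a)$, and extensional compositions $\circ_{a,b,c}:\mathrm{Hom}(b,c)\times\mathrm{Hom}(a,b)\to\mathrm{Hom}(a,c)$ satisfying identity and associativity laws and the coherence conditions $\mathrm{id}_{a'}=\mathrm{Hom}(p,p)(\mathrm{id}_a)$ for $p:a=a'$ and $\mathrm{Hom}(p,r)(g\circ f)=\mathrm{Hom}(q,r)(g)\circ\mathrm{Hom}(p,q)(f)$ for $p:a=a'$, $q:b=b'$, $r:c=c'$. $r(x)$ denotes the reflexivity proof of $x=x$. *)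

theory Defs
  imports Main
begin

text \<open>Proofs of setoid equalities are propositions,
hence automatically proof-irrelevant in HOL.\<close>

definition setoid :: "'a set \<Rightarrow> ('a \<Rightarrow> 'a \<Rightarrow> bool) \<Rightarrow> bool" where
  "setoid A eq \<longleftrightarrow>
     (\<forall>x\<in>A. eq x x) \<and>
     (\<forall>x\<in>A. \<forall>y\<in>A. eq x y \<longrightarrow> eq y x) \<and>
     (\<forall>x\<in>A. \<forall>y\<in>A. \<forall>z\<in>A. eq x y \<longrightarrow> eq y z \<longrightarrow> eq x z)"

definition ext_fun :: "'a set \<Rightarrow> ('a \<Rightarrow> 'a \<Rightarrow> bool) \<Rightarrow> 'b set \<Rightarrow> ('b \<Rightarrow> 'b \<Rightarrow> bool)
                       \<Rightarrow> ('a \<Rightarrow> 'b) \<Rightarrow> bool" where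
  "ext_fun A eqA B eqB f \<longleftrightarrow>
     (\<forall>x\<in>A. f x \<in> B) \<and> (\<forall>x\<in>A. \<forall>y\<in>A. eqA x y \<longrightarrow> eqB (f x) (f y))"

record ('o, 'm, 'c) eacat =
  C0 :: "'o set"
  eq0 :: "'o \<Rightarrow> 'o \<Rightarrow> bool"
  C1 :: "'m set"
  eq1 :: "'m \<Rightarrow> 'm \<Rightarrow> bool"
  C2 :: "'c set"
  eq2 :: "'c \<Rightarrow> 'c \<Rightarrow> bool"
  ea_id :: "'o \<Rightarrow> 'm"
  ea_dom :: "'m \<Rightarrow> 'o"
  ea_cod :: "'m \<Rightarrow> 'o"
  ea_cmp :: "'c \<Rightarrow> 'm"
  ea_fst :: "'c \<Rightarrow> 'm"
  ea_snd :: "'c \<Rightarrow> 'm"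

definition is_eacat :: "('o, 'm, 'c, 'z) eacat_scheme \<Rightarrow> bool" where
  "is_eacat C \<longleftrightarrow>
     setoid (C0 C) (eq0 C) \<and> setoid (C1 C) (eq1 C) \<and> setoid (C2 C) (eq2 C) \<and>
     ext_fun (C0 C) (eq0 C) (C1 C) (eq1 C) (ea_id C) \<and>
     ext_fun (C1 C) (eq1 C) (C0 C) (eq0 C) (ea_dom C) \<and>
     ext_fun (C1 C) (eq1 C) (C0 C) (eq0 C) (ea_cod C) \<and>
     ext_fun (C2 C) (eq2 C) (C1 C) (eq1 C) (ea_cmp C) \<and>
     ext_fun (C2 C) (eq2 C) (C1 C) (eq1 C) (ea_fst C) \<and>
     ext_fun (C2 C) (eq2 C) (C1 C) (eq1 C) (ea_snd C) \<and>
     \<comment> \<open>A1\<close>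
     (\<forall>x\<in>C0 C. eq0 C (ea_dom C (ea_id C x)) x) \<and>
     \<comment> \<open>A2\<close>
     (\<forall>x\<in>C0 C. eq0 C (ea_cod C (ea_id C x)) x) \<and>
     \<comment> \<open>A3\<close>
     (\<forall>u\<in>C2 C. eq0 C (ea_dom C (ea_cmp C u)) (ea_dom C (ea_fst C u))) \<and>
     \<comment> \<open>A4\<close>
     (\<forall>u\<in>C2 C. eq0 C (ea_cod C (ea_cmp C u)) (ea_cod C (ea_snd C u))) \<and>
     \<comment> \<open>A5\<close>
     (\<forall>u\<in>C2 C. \<forall>v\<in>C2 C. eq1 C (ea_fst C u) (ea_fst C v) \<longrightarrow>
         eq1 C (ea_snd C u) (ea_snd C v) \<longrightarrow> eq2 C u v) \<and>
     \<comment> \<open>A6\<close>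
     (\<forall>f\<in>C1 C. \<forall>g\<in>C1 C. eq0 C (ea_dom C f) (ea_cod C g) \<longrightarrow>
         (\<exists>u\<in>C2 C. eq1 C (ea_snd C u) f \<and> eq1 C (ea_fst C u) g)) \<and>
     \<comment> \<open>A7\<close>
     (\<forall>u\<in>C2 C. \<forall>y\<in>C0 C. eq1 C (ea_fst C u) (ea_id C y) \<longrightarrow>
         eq1 C (ea_cmp C u) (ea_snd C u)) \<and>
     \<comment> \<open>A8\<close>
     (\<forall>u\<in>C2 C. \<forall>x\<in>C0 C. eq1 C (ea_snd C u) (ea_id C x) \<longrightarrow>
         eq1 C (ea_cmp C u) (ea_fst C u)) \<and>
     \<comment> \<open>A9\<close>
     (\<forall>w\<in>C2 C. \<forall>v\<in>C2 C. \<forall>u\<in>C2 C. \<forall>z\<in>C2 C.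
         eq1 C (ea_fst C w) (ea_fst C v) \<longrightarrow>
         eq1 C (ea_snd C v) (ea_fst C u) \<longrightarrow>
         eq1 C (ea_snd C u) (ea_snd C z) \<longrightarrow>
         eq1 C (ea_snd C w) (ea_cmp C u) \<longrightarrow>
         eq1 C (ea_cmp C v) (ea_fst C z) \<longrightarrow>
         eq1 C (ea_cmp C w) (ea_cmp C z))"

text \<open>Since HOL proofs are propositions, the transport along p : a = a', q : b = b' can
only depend on the endpoints; this is exactly condition (F2).\<close>

record ('o, 'h) hfcat =
  Ob :: "'o set"
  obeq :: "'o \<Rightarrow> 'o \<Rightarrow> bool"
  Hom :: "'o \<Rightarrow> 'o \<Rightarrow> 'h set"
  homeq :: "'o \<Rightarrow> 'o \<Rightarrow> 'h \<Rightarrow> 'h \<Rightarrow> bool"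
  tr :: "'o \<Rightarrow> 'o \<Rightarrow> 'o \<Rightarrow> 'o \<Rightarrow> 'h \<Rightarrow> 'h"
  hid :: "'o \<Rightarrow> 'h"
  hcomp :: "'o \<Rightarrow> 'o \<Rightarrow> 'o \<Rightarrow> 'h \<Rightarrow> 'h \<Rightarrow> 'h"  \<comment> \<open>hcomp a b c g f = g o_{a,b,c} f\<close>

definition is_hfcat :: "('o, 'h, 'z) hfcat_scheme \<Rightarrow> bool" where
  "is_hfcat H \<longleftrightarrow>
     setoid (Ob H) (obeq H) \<and>
     (\<forall>a\<in>Ob H. \<forall>b\<in>Ob H. setoid (Hom H a b) (homeq H a b)) \<and>
     \<comment> \<open>transports are extensional functions between the fibres\<close>
     (\<forall>a\<in>Ob H. \<forall>b\<in>Ob H. \<forall>a'\<in>Ob H. \<forall>b'\<in>Ob H. obeq H a a' \<longrightarrow> obeq H b b' \<longrightarrow>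
         ext_fun (Hom H a b) (homeq H a b) (Hom H a' b') (homeq H a' b') (tr H a b a' b')) \<and>
     \<comment> \<open>(F1)\<close>
     (\<forall>a\<in>Ob H. \<forall>b\<in>Ob H. \<forall>f\<in>Hom H a b. homeq H a b (tr H a b a b f) f) \<and>
     \<comment> \<open>(F3)\<close>
     (\<forall>a\<in>Ob H. \<forall>b\<in>Ob H. \<forall>a'\<in>Ob H. \<forall>b'\<in>Ob H. \<forall>a''\<in>Ob H. \<forall>b''\<in>Ob H.
         obeq H a a' \<longrightarrow> obeq H b b' \<longrightarrow> obeq H a' a'' \<longrightarrow> obeq H b' b'' \<longrightarrow>
         (\<forall>f\<in>Hom H a b. homeq H a'' b''
              (tr H a' b' a'' b'' (tr H a b a' b' f)) (tr H a b a'' b'' f))) \<and>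
     \<comment> \<open>identities\<close>
     (\<forall>a\<in>Ob H. hid H a \<in> Hom H a a) \<and>
     \<comment> \<open>compositions are extensional functions Hom(b,c) x Hom(a,b) -> Hom(a,c)\<close>
     (\<forall>a\<in>Ob H. \<forall>b\<in>Ob H. \<forall>c\<in>Ob H. \<forall>g\<in>Hom H b c. \<forall>f\<in>Hom H a b.
         hcomp H a b c g f \<in> Hom H a c) \<and>
     (\<forall>a\<in>Ob H. \<forall>b\<in>Ob H. \<forall>c\<in>Ob H. \<forall>g\<in>Hom H b c. \<forall>g'\<in>Hom H b c.
         \<forall>f\<in>Hom H a b. \<forall>f'\<in>Hom H a b.
         homeq H b c g g' \<longrightarrow> homeq H a b f f' \<longrightarrow>
         homeq H a c (hcomp H a b c g f) (hcomp H a b c g' f')) \<and>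
     \<comment> \<open>identity laws\<close>
     (\<forall>a\<in>Ob H. \<forall>b\<in>Ob H. \<forall>f\<in>Hom H a b.
         homeq H a b (hcomp H a b b (hid H b) f) f \<and>
         homeq H a b (hcomp H a a b f (hid H a)) f) \<and>
     \<comment> \<open>associativity\<close>
     (\<forall>a\<in>Ob H. \<forall>b\<in>Ob H. \<forall>c\<in>Ob H. \<forall>d\<in>Ob H.
         \<forall>h\<in>Hom H c d. \<forall>g\<in>Hom H b c. \<forall>f\<in>Hom H a b.
         homeq H a d (hcomp H a c d h (hcomp H a b c g f))
                     (hcomp H a b d (hcomp H b c d h g) f)) \<and>
     \<comment> \<open>coherence of identities\<close>
     (\<forall>a\<in>Ob H. \<forall>a'\<in>Ob H. obeq H a a' \<longrightarrow>
         homeq H a' a' (hid H a') (tr H a a a' a' (hid H a))) \<and>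
     \<comment> \<open>coherence of composition\<close>
     (\<forall>a\<in>Ob H. \<forall>b\<in>Ob H. \<forall>c\<in>Ob H. \<forall>a'\<in>Ob H. \<forall>b'\<in>Ob H. \<forall>c'\<in>Ob H.
         obeq H a a' \<longrightarrow> obeq H b b' \<longrightarrow> obeq H c c' \<longrightarrow>
         (\<forall>g\<in>Hom H b c. \<forall>f\<in>Hom H a b.
            homeq H a' c' (tr H a c a' c' (hcomp H a b c g f))
                          (hcomp H a' b' c' (tr H b c b' c' g) (tr H a b a' b' f))))"

text \<open>An element (f, r) of
Hom(a,b) is represented by f alone, r being a (proof-irrelevant) proof of
dom f = a and cod f = b; transports are the identity on the underlying arrow; the
composite uses the (up to equality unique) u with snd u = g and fst u = f.\<close>

definition ea_to_hf :: "('o, 'm, 'c, 'z) eacat_scheme \<Rightarrow> ('o, 'm) hfcat" where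
  "ea_to_hf C = \<lparr>
     Ob = C0 C,
     obeq = eq0 C,
     Hom = (\<lambda>a b. {f \<in> C1 C. eq0 C (ea_dom C f) a \<and> eq0 C (ea_cod C f) b}),
     homeq = (\<lambda>a b. eq1 C),
     tr = (\<lambda>a b a' b' f. f),
     hid = ea_id C,
     hcomp = (\<lambda>a b c g f. ea_cmp C (SOME u. u \<in> C2 C \<and> eq1 C (ea_snd C u) g \<and> eq1 C (ea_fst C u) f))
   \<rparr>"

text \<open>Arrows are triples
(a, b, f) with f in Hom(a,b); composable pairs are pairs (F, G) of arrows with
cod F = dom G (the proof p being proof-irrelevant);
cmp((a,b,f),(c,d,g),p) = (a, d, g o (T(p) o f)) with T(p) = Hom(r(b),p)(id_b).\<close>

definition hf_to_ea :: "('o, 'h, 'z) hfcat_scheme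
                        \<Rightarrow> ('o, 'o \<times> 'o \<times> 'h, ('o \<times> 'o \<times> 'h) \<times> ('o \<times> 'o \<times> 'h)) eacat" where
  "hf_to_ea H = (let
      A1 = {(a, b, f). a \<in> Ob H \<and> b \<in> Ob H \<and> f \<in> Hom H a b};
      E1 = (\<lambda>(a, b, f) (a', b', f'). obeq H a a' \<and> obeq H b b' \<and> homeq H a' b' (tr H a b a' b' f) f')
    in \<lparr>
     C0 = Ob H,
     eq0 = obeq H,
     C1 = A1,
     eq1 = E1,
     C2 = {(F, G). F \<in> A1 \<and> G \<in> A1 \<and> obeq H (fst (snd F)) (fst G)},
     eq2 = (\<lambda>(F, G) (F', G'). E1 F F' \<and> E1 G G'),
     ea_id = (\<lambda>a. (a, a, hid H a)),
     ea_dom = (\<lambda>(a, b, f). a),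
     ea_cod = (\<lambda>(a, b, f). b),
     ea_cmp = (\<lambda>((a, b, f), (c, d, g)).
                 (a, d, hcomp H a c d g (hcomp H a b c (tr H b b b c (hid H b)) f))),
     ea_fst = (\<lambda>(F, G). F),
     ea_snd = (\<lambda>(F, G). G)
   \<rparr>)"

end

theory Submission
  imports Defs
begin

text \<open>
  From an essentially algebraic category: the hom-setoid \<open>Hom(a, b)\<close> consists of the arrows whose
  domain and codomain are equal to \<open>a\<close> and \<open>b\<close>; composition chooses a composable pair by A6, and
  A5 makes the result independent of that choice. A3/A4 type the composite, A7/A8 are the unit
  laws and A9 yields associativity; transports are identities, so the coherence conditions are trivial.

  From an HF-category: on well-typed triples the relation
  \<open>(a, b, f) \<sim> (a', b', f') \<longleftrightarrow> Hom(p, q)(f) = f'\<close> is an equivalence by (F1)--(F3), and the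
  coherence conditions make identities and composition respect it. The composite of
  \<open>(a, b, f)\<close> and \<open>(c, d, g)\<close> inserts \<open>T(p) = Hom(r(b), p)(id\<^sub>b)\<close>, which is itself
  \<open>\<sim>\<close>-equal to \<open>(b, b, id\<^sub>b)\<close>; hence up to \<open>\<sim>\<close> it is the ordinary composite, and A7--A9
  reduce to the unit and associativity laws of the HF-category.
\<close>

lemma setoidI:
  assumes "\<And>x. x \<in> A \<Longrightarrow> eq x x" "\<And>x y. \<lbrakk>x \<in> A; y \<in> A; eq x y\<rbrakk> \<Longrightarrow> eq y x"
    and "\<And>x y z. \<lbrakk>x \<in> A; y \<in> A; z \<in> A; eq x y; eq y z\<rbrakk> \<Longrightarrow> eq x z"
  shows "setoid A eq"
  unfolding setoid_def using assms by blast

lemma setoid_refl: "setoid A eq \<Longrightarrow> x \<in> A \<Longrightarrow> eq x x"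
  unfolding setoid_def by blast

lemma setoid_sym: "setoid A eq \<Longrightarrow> x \<in> A \<Longrightarrow> y \<in> A \<Longrightarrow> eq x y \<Longrightarrow> eq y x"
  unfolding setoid_def by blast

lemma setoid_trans:
  "setoid A eq \<Longrightarrow> x \<in> A \<Longrightarrow> y \<in> A \<Longrightarrow> z \<in> A \<Longrightarrow> eq x y \<Longrightarrow> eq y z \<Longrightarrow> eq x z"
  unfolding setoid_def by blast

lemma setoid_subset: "setoid A eq \<Longrightarrow> B \<subseteq> A \<Longrightarrow> setoid B eq"
  unfolding setoid_def by blast

lemma setoid_pairs:
  assumes "setoid A eq" "S \<subseteq> A \<times> A"
  shows "setoid S (\<lambda>(x, y) (x', y'). eq x x' \<and> eq y y')"
  using assms unfolding setoid_def by (simp add: Ball_def split_paired_All subset_iff) meson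

lemma ext_funI:
  assumes "\<And>x. x \<in> A \<Longrightarrow> f x \<in> B" "\<And>x y. \<lbrakk>x \<in> A; y \<in> A; eqA x y\<rbrakk> \<Longrightarrow> eqB (f x) (f y)"
  shows "ext_fun A eqA B eqB f"
  unfolding ext_fun_def using assms by blast

lemma ext_fun_closed: "ext_fun A eqA B eqB f \<Longrightarrow> x \<in> A \<Longrightarrow> f x \<in> B"
  unfolding ext_fun_def by blast

lemma ext_fun_cong: "ext_fun A eqA B eqB f \<Longrightarrow> x \<in> A \<Longrightarrow> y \<in> A \<Longrightarrow> eqA x y \<Longrightarrow> eqB (f x) (f y)"
  unfolding ext_fun_def by blast

lemma ext_fun_inclusion: "B \<subseteq> B' \<Longrightarrow> (\<And>x. x \<in> B \<Longrightarrow> eq x x) \<Longrightarrow> ext_fun B eq B' eq (\<lambda>x. x)"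
  unfolding ext_fun_def by blast

locale ea_category =
  fixes C :: "('o, 'm, 'c, 'z) eacat_scheme"
  assumes setoid_C0: "setoid (C0 C) (eq0 C)"
    and setoid_C1: "setoid (C1 C) (eq1 C)"
    and setoid_C2: "setoid (C2 C) (eq2 C)"
    and ext_id: "ext_fun (C0 C) (eq0 C) (C1 C) (eq1 C) (ea_id C)"
    and ext_dom: "ext_fun (C1 C) (eq1 C) (C0 C) (eq0 C) (ea_dom C)"
    and ext_cod: "ext_fun (C1 C) (eq1 C) (C0 C) (eq0 C) (ea_cod C)"
    and ext_cmp: "ext_fun (C2 C) (eq2 C) (C1 C) (eq1 C) (ea_cmp C)"
    and ext_fst: "ext_fun (C2 C) (eq2 C) (C1 C) (eq1 C) (ea_fst C)"
    and ext_snd: "ext_fun (C2 C) (eq2 C) (C1 C) (eq1 C) (ea_snd C)"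
    and dom_id: "x \<in> C0 C \<Longrightarrow> eq0 C (ea_dom C (ea_id C x)) x"
    and cod_id: "x \<in> C0 C \<Longrightarrow> eq0 C (ea_cod C (ea_id C x)) x"
    and dom_cmp: "u \<in> C2 C \<Longrightarrow> eq0 C (ea_dom C (ea_cmp C u)) (ea_dom C (ea_fst C u))"
    and cod_cmp: "u \<in> C2 C \<Longrightarrow> eq0 C (ea_cod C (ea_cmp C u)) (ea_cod C (ea_snd C u))"
    and pair_eqI: "\<lbrakk>u \<in> C2 C; v \<in> C2 C; eq1 C (ea_fst C u) (ea_fst C v);
        eq1 C (ea_snd C u) (ea_snd C v)\<rbrakk> \<Longrightarrow> eq2 C u v"
    and pair_exists: "\<lbrakk>f \<in> C1 C; g \<in> C1 C; eq0 C (ea_dom C f) (ea_cod C g)\<rbrakk> \<Longrightarrow>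
        \<exists>u\<in>C2 C. eq1 C (ea_snd C u) f \<and> eq1 C (ea_fst C u) g"
    and cmp_id_fst: "\<lbrakk>u \<in> C2 C; y \<in> C0 C; eq1 C (ea_fst C u) (ea_id C y)\<rbrakk> \<Longrightarrow>
        eq1 C (ea_cmp C u) (ea_snd C u)"
    and cmp_id_snd: "\<lbrakk>u \<in> C2 C; x \<in> C0 C; eq1 C (ea_snd C u) (ea_id C x)\<rbrakk> \<Longrightarrow>
        eq1 C (ea_cmp C u) (ea_fst C u)"
    and cmp_assoc_cong: "\<lbrakk>w \<in> C2 C; v \<in> C2 C; u \<in> C2 C; z \<in> C2 C;
        eq1 C (ea_fst C w) (ea_fst C v); eq1 C (ea_snd C v) (ea_fst C u);
        eq1 C (ea_snd C u) (ea_snd C z); eq1 C (ea_snd C w) (ea_cmp C u);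
        eq1 C (ea_cmp C v) (ea_fst C z)\<rbrakk> \<Longrightarrow> eq1 C (ea_cmp C w) (ea_cmp C z)"

lemma is_eacat_iff_ea_category: "is_eacat C \<longleftrightarrow> ea_category C"
  unfolding is_eacat_def ea_category_def by (simp add: Ball_def) meson

locale hf_category =
  fixes H :: "('o, 'h, 'z) hfcat_scheme"
  assumes setoid_Ob: "setoid (Ob H) (obeq H)"
    and setoid_Hom: "\<lbrakk>a \<in> Ob H; b \<in> Ob H\<rbrakk> \<Longrightarrow> setoid (Hom H a b) (homeq H a b)"
    and ext_tr: "\<lbrakk>a \<in> Ob H; b \<in> Ob H; a' \<in> Ob H; b' \<in> Ob H; obeq H a a'; obeq H b b'\<rbrakk> \<Longrightarrow>
        ext_fun (Hom H a b) (homeq H a b) (Hom H a' b') (homeq H a' b') (tr H a b a' b')"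
    and tr_refl: "\<lbrakk>a \<in> Ob H; b \<in> Ob H; f \<in> Hom H a b\<rbrakk> \<Longrightarrow> homeq H a b (tr H a b a b f) f"
    and tr_tr: "\<lbrakk>a \<in> Ob H; b \<in> Ob H; a' \<in> Ob H; b' \<in> Ob H; a'' \<in> Ob H; b'' \<in> Ob H;
        obeq H a a'; obeq H b b'; obeq H a' a''; obeq H b' b''; f \<in> Hom H a b\<rbrakk> \<Longrightarrow>
        homeq H a'' b'' (tr H a' b' a'' b'' (tr H a b a' b' f)) (tr H a b a'' b'' f)"
    and hid_in: "a \<in> Ob H \<Longrightarrow> hid H a \<in> Hom H a a"
    and hcomp_in: "\<lbrakk>a \<in> Ob H; b \<in> Ob H; c \<in> Ob H; g \<in> Hom H b c; f \<in> Hom H a b\<rbrakk> \<Longrightarrow>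
        hcomp H a b c g f \<in> Hom H a c"
    and hcomp_cong: "\<lbrakk>a \<in> Ob H; b \<in> Ob H; c \<in> Ob H; g \<in> Hom H b c; g' \<in> Hom H b c;
        f \<in> Hom H a b; f' \<in> Hom H a b; homeq H b c g g'; homeq H a b f f'\<rbrakk> \<Longrightarrow>
        homeq H a c (hcomp H a b c g f) (hcomp H a b c g' f')"
    and hcomp_hid_left: "\<lbrakk>a \<in> Ob H; b \<in> Ob H; f \<in> Hom H a b\<rbrakk> \<Longrightarrow>
        homeq H a b (hcomp H a b b (hid H b) f) f"
    and hcomp_hid_right: "\<lbrakk>a \<in> Ob H; b \<in> Ob H; f \<in> Hom H a b\<rbrakk> \<Longrightarrow>
        homeq H a b (hcomp H a a b f (hid H a)) f"
    and hcomp_assoc: "\<lbrakk>a \<in> Ob H; b \<in> Ob H; c \<in> Ob H; d \<in> Ob H;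
        h \<in> Hom H c d; g \<in> Hom H b c; f \<in> Hom H a b\<rbrakk> \<Longrightarrow>
        homeq H a d (hcomp H a c d h (hcomp H a b c g f)) (hcomp H a b d (hcomp H b c d h g) f)"
    and tr_hid: "\<lbrakk>a \<in> Ob H; a' \<in> Ob H; obeq H a a'\<rbrakk> \<Longrightarrow>
        homeq H a' a' (hid H a') (tr H a a a' a' (hid H a))"
    and tr_hcomp: "\<lbrakk>a \<in> Ob H; b \<in> Ob H; c \<in> Ob H; a' \<in> Ob H; b' \<in> Ob H; c' \<in> Ob H;
        obeq H a a'; obeq H b b'; obeq H c c'; g \<in> Hom H b c; f \<in> Hom H a b\<rbrakk> \<Longrightarrow>
        homeq H a' c' (tr H a c a' c' (hcomp H a b c g f))
          (hcomp H a' b' c' (tr H b c b' c' g) (tr H a b a' b' f))"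

lemma is_hfcat_iff_hf_category: "is_hfcat H \<longleftrightarrow> hf_category H"
  unfolding is_hfcat_def hf_category_def by (simp add: Ball_def) meson

section \<open>HF-categories from essentially algebraic categories\<close>

context ea_category
begin

abbreviation ea_ob_eq (infix "\<approx>\<^sub>0" 50) where "x \<approx>\<^sub>0 y \<equiv> eq0 C x y"
abbreviation ea_arr_eq (infix "\<approx>\<^sub>1" 50) where "f \<approx>\<^sub>1 g \<equiv> eq1 C f g"

lemmas id_in = ext_fun_closed[OF ext_id]
lemmas dom_in = ext_fun_closed[OF ext_dom]
lemmas cod_in = ext_fun_closed[OF ext_cod]
lemmas cmp_in = ext_fun_closed[OF ext_cmp]
lemmas fst_in = ext_fun_closed[OF ext_fst]
lemmas snd_in = ext_fun_closed[OF ext_snd]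
lemmas id_cong = ext_fun_cong[OF ext_id]
lemmas dom_cong = ext_fun_cong[OF ext_dom]
lemmas cod_cong = ext_fun_cong[OF ext_cod]
lemmas cmp_cong = ext_fun_cong[OF ext_cmp]

lemmas ob_eq_sym = setoid_sym[OF setoid_C0]
lemmas ob_eq_trans = setoid_trans[OF setoid_C0]
lemmas arr_eq_refl = setoid_refl[OF setoid_C1]
lemmas arr_eq_sym = setoid_sym[OF setoid_C1]
lemmas arr_eq_trans = setoid_trans[OF setoid_C1]

definition composable_pair :: "'m \<Rightarrow> 'm \<Rightarrow> 'c" where
  "composable_pair g f = (SOME u. u \<in> C2 C \<and> ea_snd C u \<approx>\<^sub>1 g \<and> ea_fst C u \<approx>\<^sub>1 f)"

definition arr_comp :: "'m \<Rightarrow> 'm \<Rightarrow> 'm" where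
  "arr_comp g f = ea_cmp C (composable_pair g f)"

context
  fixes f g :: 'm
  assumes f: "f \<in> C1 C" and g: "g \<in> C1 C" and fg: "ea_dom C g \<approx>\<^sub>0 ea_cod C f"
begin

lemma composable_pair:
  "composable_pair g f \<in> C2 C" "ea_snd C (composable_pair g f) \<approx>\<^sub>1 g"
  "ea_fst C (composable_pair g f) \<approx>\<^sub>1 f"
proof -
  have "\<exists>u. u \<in> C2 C \<and> ea_snd C u \<approx>\<^sub>1 g \<and> ea_fst C u \<approx>\<^sub>1 f"
    using pair_exists[OF g f fg] by blast
  then show "composable_pair g f \<in> C2 C" "ea_snd C (composable_pair g f) \<approx>\<^sub>1 g"
    "ea_fst C (composable_pair g f) \<approx>\<^sub>1 f"
    unfolding composable_pair_def by (metis (mono_tags, lifting) someI_ex)+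
qed

lemma arr_comp_in: "arr_comp g f \<in> C1 C"
  unfolding arr_comp_def using cmp_in composable_pair(1) .

lemma dom_arr_comp: "ea_dom C (arr_comp g f) \<approx>\<^sub>0 ea_dom C f"
  unfolding arr_comp_def
  using composable_pair dom_cmp dom_cong ob_eq_trans cmp_in fst_in dom_in f by meson

lemma cod_arr_comp: "ea_cod C (arr_comp g f) \<approx>\<^sub>0 ea_cod C g"
  unfolding arr_comp_def
  using composable_pair cod_cmp cod_cong ob_eq_trans cmp_in snd_in cod_in g by meson

lemma arr_comp_id_left: "y \<in> C0 C \<Longrightarrow> g \<approx>\<^sub>1 ea_id C y \<Longrightarrow> arr_comp g f \<approx>\<^sub>1 f"
  unfolding arr_comp_def
  using composable_pair cmp_id_snd arr_eq_trans cmp_in fst_in snd_in id_in f g by meson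

lemma arr_comp_id_right: "x \<in> C0 C \<Longrightarrow> f \<approx>\<^sub>1 ea_id C x \<Longrightarrow> arr_comp g f \<approx>\<^sub>1 g"
  unfolding arr_comp_def
  using composable_pair cmp_id_fst arr_eq_trans cmp_in fst_in snd_in id_in f g by meson

end

lemma arr_comp_cong:
  assumes f: "f \<in> C1 C" and g: "g \<in> C1 C" and fg: "ea_dom C g \<approx>\<^sub>0 ea_cod C f"
    and f': "f' \<in> C1 C" and g': "g' \<in> C1 C" and fg': "ea_dom C g' \<approx>\<^sub>0 ea_cod C f'"
    and "f \<approx>\<^sub>1 f'" "g \<approx>\<^sub>1 g'"
  shows "arr_comp g f \<approx>\<^sub>1 arr_comp g' f'"
proof -
  note u = composable_pair[OF f g fg] and v = composable_pair[OF f' g' fg']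
  have "ea_fst C (composable_pair g f) \<approx>\<^sub>1 ea_fst C (composable_pair g' f')"
    by (meson arr_eq_sym arr_eq_trans assms fst_in u v)
  moreover have "ea_snd C (composable_pair g f) \<approx>\<^sub>1 ea_snd C (composable_pair g' f')"
    by (meson arr_eq_sym arr_eq_trans assms snd_in u v)
  ultimately show ?thesis
    unfolding arr_comp_def using cmp_cong pair_eqI u(1) v(1) by blast
qed

lemma arr_comp_assoc:
  assumes f: "f \<in> C1 C" and g: "g \<in> C1 C" and h: "h \<in> C1 C"
    and fg: "ea_dom C g \<approx>\<^sub>0 ea_cod C f" and gh: "ea_dom C h \<approx>\<^sub>0 ea_cod C g"
  shows "arr_comp h (arr_comp g f) \<approx>\<^sub>1 arr_comp (arr_comp h g) f"
proof -
  have hg_f: "ea_dom C (arr_comp h g) \<approx>\<^sub>0 ea_cod C f"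
    by (meson dom_arr_comp ob_eq_trans arr_comp_in dom_in cod_in f g h fg gh)
  have h_gf: "ea_dom C h \<approx>\<^sub>0 ea_cod C (arr_comp g f)"
    by (meson cod_arr_comp ob_eq_sym ob_eq_trans arr_comp_in cod_in dom_in f g h fg gh)
  note v = composable_pair[OF f g fg] and u = composable_pair[OF g h gh]
    and w = composable_pair[OF f arr_comp_in[OF g h gh] hg_f]
    and z = composable_pair[OF arr_comp_in[OF f g fg] h h_gf]
  have "ea_cmp C (composable_pair (arr_comp h g) f) \<approx>\<^sub>1 ea_cmp C (composable_pair h (arr_comp g f))"
  proof (rule cmp_assoc_cong[OF w(1) v(1) u(1) z(1)])
    show "ea_fst C (composable_pair (arr_comp h g) f) \<approx>\<^sub>1 ea_fst C (composable_pair g f)"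
      by (meson arr_eq_sym arr_eq_trans f fst_in v w)
    show "ea_snd C (composable_pair g f) \<approx>\<^sub>1 ea_fst C (composable_pair h g)"
      by (meson arr_eq_sym arr_eq_trans g fst_in snd_in u v)
    show "ea_snd C (composable_pair h g) \<approx>\<^sub>1 ea_snd C (composable_pair h (arr_comp g f))"
      by (meson arr_eq_sym arr_eq_trans h snd_in u z)
    show "ea_snd C (composable_pair (arr_comp h g) f) \<approx>\<^sub>1 ea_cmp C (composable_pair h g)"
      using w(2) unfolding arr_comp_def .
    show "ea_cmp C (composable_pair g f) \<approx>\<^sub>1 ea_fst C (composable_pair h (arr_comp g f))"
      using arr_eq_sym[OF fst_in[OF z(1)] arr_comp_in[OF f g fg] z(3)] unfolding arr_comp_def .
  qed
  then have "arr_comp (arr_comp h g) f \<approx>\<^sub>1 arr_comp h (arr_comp g f)"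
    unfolding arr_comp_def .
  then show ?thesis
    by (rule arr_eq_sym[OF arr_comp_in[OF f arr_comp_in[OF g h gh] hg_f] arr_comp_in[OF arr_comp_in[OF f g fg] h h_gf]])
qed

end

definition (in ea_category) hom :: "'o \<Rightarrow> 'o \<Rightarrow> 'm set" where
  "hom a b = {f \<in> C1 C. ea_dom C f \<approx>\<^sub>0 a \<and> ea_cod C f \<approx>\<^sub>0 b}"

lemma (in ea_category) ea_to_hf_simps:
  "Ob (ea_to_hf C) = C0 C" "obeq (ea_to_hf C) = eq0 C" "Hom (ea_to_hf C) = hom"
  "homeq (ea_to_hf C) a b = eq1 C" "tr (ea_to_hf C) a b a' b' f = f" "hid (ea_to_hf C) = ea_id C"
  "hcomp (ea_to_hf C) a b c g f = arr_comp g f"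
  unfolding ea_to_hf_def hom_def arr_comp_def composable_pair_def by (simp_all add: fun_eq_iff)

context ea_category
begin

lemma hom_in_C1: "f \<in> hom a b \<Longrightarrow> f \<in> C1 C"
  unfolding hom_def by blast

lemma hom_transport:
  assumes "a \<in> C0 C" "b \<in> C0 C" "a' \<in> C0 C" "b' \<in> C0 C" "a \<approx>\<^sub>0 a'" "b \<approx>\<^sub>0 b'"
    and "f \<in> hom a b"
  shows "f \<in> hom a' b'"
proof -
  have f: "f \<in> C1 C" "ea_dom C f \<approx>\<^sub>0 a" "ea_cod C f \<approx>\<^sub>0 b"
    using assms(7) unfolding hom_def by auto
  show ?thesis
    unfolding hom_def using f ob_eq_trans[OF dom_in[OF f(1)] assms(1,3) f(2) assms(5)]
      ob_eq_trans[OF cod_in[OF f(1)] assms(2,4) f(3) assms(6)] by blast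
qed

lemma id_in_hom: "a \<in> C0 C \<Longrightarrow> ea_id C a \<in> hom a a"
  unfolding hom_def using id_in dom_id cod_id by simp

lemma hom_composable:
  assumes "b \<in> C0 C" "g \<in> hom b c" "f \<in> hom a b"
  shows "ea_dom C g \<approx>\<^sub>0 ea_cod C f"
proof -
  have "g \<in> C1 C" "ea_dom C g \<approx>\<^sub>0 b" "f \<in> C1 C" "ea_cod C f \<approx>\<^sub>0 b"
    using assms unfolding hom_def by auto
  then show ?thesis
    using ob_eq_trans ob_eq_sym dom_in cod_in assms(1) by meson
qed

lemma arr_comp_in_hom:
  assumes "a \<in> C0 C" "b \<in> C0 C" "c \<in> C0 C" "g \<in> hom b c" "f \<in> hom a b"
  shows "arr_comp g f \<in> hom a c"
proof -
  have f: "f \<in> C1 C" "ea_dom C f \<approx>\<^sub>0 a" "ea_cod C f \<approx>\<^sub>0 b"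
    and g: "g \<in> C1 C" "ea_dom C g \<approx>\<^sub>0 b" "ea_cod C g \<approx>\<^sub>0 c"
    using assms unfolding hom_def by auto
  have fg: "ea_dom C g \<approx>\<^sub>0 ea_cod C f"
    by (rule hom_composable[OF assms(2,4,5)])
  have "ea_dom C (arr_comp g f) \<approx>\<^sub>0 a"
    by (rule ob_eq_trans[OF dom_in[OF arr_comp_in[OF f(1) g(1) fg]] dom_in[OF f(1)] assms(1)
          dom_arr_comp[OF f(1) g(1) fg] f(2)])
  moreover have "ea_cod C (arr_comp g f) \<approx>\<^sub>0 c"
    by (rule ob_eq_trans[OF cod_in[OF arr_comp_in[OF f(1) g(1) fg]] cod_in[OF g(1)] assms(3)
          cod_arr_comp[OF f(1) g(1) fg] g(3)])
  ultimately show ?thesis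
    unfolding hom_def using arr_comp_in[OF f(1) g(1) fg] by blast
qed

end

lemma (in ea_category) hf_category_ea_to_hf: "hf_category (ea_to_hf C)"
proof (rule hf_category.intro, unfold ea_to_hf_simps)
  show "setoid (C0 C) (eq0 C)"
    by (rule setoid_C0)
next
  fix a b
  show "setoid (hom a b) (eq1 C)"
    using setoid_subset[OF setoid_C1] hom_in_C1 by blast
next
  fix a b a' b'
  assume "a \<in> C0 C" "b \<in> C0 C" "a' \<in> C0 C" "b' \<in> C0 C" "a \<approx>\<^sub>0 a'" "b \<approx>\<^sub>0 b'"
  then have "hom a b \<subseteq> hom a' b'"
    using hom_transport by blast
  then show "ext_fun (hom a b) (eq1 C) (hom a' b') (eq1 C) (\<lambda>f. f)"
    by (rule ext_fun_inclusion) (rule arr_eq_refl[OF hom_in_C1])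
next
  fix a b f
  assume "f \<in> hom a b"
  then show "f \<approx>\<^sub>1 f"
    by (rule arr_eq_refl[OF hom_in_C1])
  then show "f \<approx>\<^sub>1 f" .
next
  fix a
  assume "a \<in> C0 C"
  then show "ea_id C a \<in> hom a a"
    by (rule id_in_hom)
next
  fix a b c g f
  assume "a \<in> C0 C" "b \<in> C0 C" "c \<in> C0 C" "g \<in> hom b c" "f \<in> hom a b"
  then show "arr_comp g f \<in> hom a c"
    by (rule arr_comp_in_hom)
next
  fix a b c g g' f f'
  assume b: "b \<in> C0 C" and hom: "g \<in> hom b c" "g' \<in> hom b c" "f \<in> hom a b" "f' \<in> hom a b"
    and "g \<approx>\<^sub>1 g'" "f \<approx>\<^sub>1 f'"
  then show "arr_comp g f \<approx>\<^sub>1 arr_comp g' f'"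
    using arr_comp_cong[OF hom_in_C1[OF hom(3)] hom_in_C1[OF hom(1)] hom_composable[OF b hom(1,3)]
        hom_in_C1[OF hom(4)] hom_in_C1[OF hom(2)] hom_composable[OF b hom(2,4)]] by blast
next
  fix a b f
  assume b: "b \<in> C0 C" and f: "f \<in> hom a b"
  show "arr_comp (ea_id C b) f \<approx>\<^sub>1 f"
    by (rule arr_comp_id_left[OF hom_in_C1[OF f] id_in[OF b] hom_composable[OF b id_in_hom[OF b] f] b
          arr_eq_refl[OF id_in[OF b]]])
next
  fix a b f
  assume a: "a \<in> C0 C" and f: "f \<in> hom a b"
  show "arr_comp f (ea_id C a) \<approx>\<^sub>1 f"
    by (rule arr_comp_id_right[OF id_in[OF a] hom_in_C1[OF f] hom_composable[OF a f id_in_hom[OF a]] a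
          arr_eq_refl[OF id_in[OF a]]])
next
  fix a b c d h g f
  assume "b \<in> C0 C" "c \<in> C0 C" and hom: "h \<in> hom c d" "g \<in> hom b c" "f \<in> hom a b"
  then show "arr_comp h (arr_comp g f) \<approx>\<^sub>1 arr_comp (arr_comp h g) f"
    using arr_comp_assoc[OF hom_in_C1[OF hom(3)] hom_in_C1[OF hom(2)] hom_in_C1[OF hom(1)]]
      hom_composable by blast
next
  fix a a'
  assume "a \<in> C0 C" "a' \<in> C0 C" "a \<approx>\<^sub>0 a'"
  then show "ea_id C a' \<approx>\<^sub>1 ea_id C a"
    by (simp add: id_cong ob_eq_sym)
next
  fix a b c g f
  assume "a \<in> C0 C" "b \<in> C0 C" "c \<in> C0 C" "g \<in> hom b c" "f \<in> hom a b"
  then show "arr_comp g f \<approx>\<^sub>1 arr_comp g f"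
    by (rule arr_eq_refl[OF hom_in_C1[OF arr_comp_in_hom]])
qed

section \<open>Essentially algebraic categories from HF-categories\<close>

context hf_category
begin

lemmas obeq_refl = setoid_refl[OF setoid_Ob]
lemmas obeq_sym = setoid_sym[OF setoid_Ob]
lemmas obeq_trans = setoid_trans[OF setoid_Ob]
lemmas homeq_refl = setoid_refl[OF setoid_Hom]
lemmas homeq_sym = setoid_sym[OF setoid_Hom]
lemmas homeq_trans = setoid_trans[OF setoid_Hom]
lemmas tr_in = ext_fun_closed[OF ext_tr]
lemmas tr_cong = ext_fun_cong[OF ext_tr]

definition arr :: "('o \<times> 'o \<times> 'h) set" where
  "arr = {(a, b, f). a \<in> Ob H \<and> b \<in> Ob H \<and> f \<in> Hom H a b}"

definition arr_eq :: "'o \<times> 'o \<times> 'h \<Rightarrow> 'o \<times> 'o \<times> 'h \<Rightarrow> bool" where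
  "arr_eq = (\<lambda>(a, b, f) (a', b', f'). obeq H a a' \<and> obeq H b b' \<and> homeq H a' b' (tr H a b a' b' f) f')"

lemma mem_arr [simp]: "(a, b, f) \<in> arr \<longleftrightarrow> a \<in> Ob H \<and> b \<in> Ob H \<and> f \<in> Hom H a b"
  unfolding arr_def by simp

lemma arr_eq_simp [simp]:
  "arr_eq (a, b, f) (a', b', f') \<longleftrightarrow> obeq H a a' \<and> obeq H b b' \<and> homeq H a' b' (tr H a b a' b' f) f'"
  unfolding arr_eq_def by simp

text \<open>Restricted to well-typed triples, \<open>arr_eq\<close> becomes symmetric and transitive without side
  conditions, so that chains of \<open>\<approx>\<close> can be written with \<open>also\<close>/\<open>finally\<close>.\<close>

definition arr_equiv :: "'o \<times> 'o \<times> 'h \<Rightarrow> 'o \<times> 'o \<times> 'h \<Rightarrow> bool" (infix "\<approx>" 50) where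
  "x \<approx> y \<longleftrightarrow> x \<in> arr \<and> y \<in> arr \<and> arr_eq x y"

lemma arr_equiv_triple:
  "(a, b, f) \<approx> (a', b', f') \<longleftrightarrow>
     a \<in> Ob H \<and> b \<in> Ob H \<and> f \<in> Hom H a b \<and> a' \<in> Ob H \<and> b' \<in> Ob H \<and> f' \<in> Hom H a' b' \<and>
     obeq H a a' \<and> obeq H b b' \<and> homeq H a' b' (tr H a b a' b' f) f'"
  unfolding arr_equiv_def by auto

lemma arr_equiv_refl: "x \<in> arr \<Longrightarrow> x \<approx> x"
  by (cases x) (auto simp: arr_equiv_triple obeq_refl tr_refl)

lemma arr_equiv_sym [sym]:
  assumes "x \<approx> y"
  shows "y \<approx> x"
proof -
  obtain a b f a' b' f' where xy: "x = (a, b, f)" "y = (a', b', f')"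
    by (cases x, cases y)
  have ob: "a \<in> Ob H" "b \<in> Ob H" "a' \<in> Ob H" "b' \<in> Ob H" and hom: "f \<in> Hom H a b" "f' \<in> Hom H a' b'"
    and eq: "obeq H a a'" "obeq H b b'" "homeq H a' b' (tr H a b a' b' f) f'"
    using assms unfolding xy arr_equiv_triple by auto
  have eq': "obeq H a' a" "obeq H b' b"
    using ob eq obeq_sym by blast+
  have tf: "tr H a b a' b' f \<in> Hom H a' b'"
    by (rule tr_in[OF ob eq(1,2) hom(1)])
  have "homeq H a b (tr H a' b' a b f') (tr H a' b' a b (tr H a b a' b' f))"
    by (rule tr_cong[OF ob(3,4,1,2) eq' hom(2) tf homeq_sym[OF ob(3,4) tf hom(2) eq(3)]])
  moreover have "homeq H a b (tr H a' b' a b (tr H a b a' b' f)) f"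
    using homeq_trans[OF ob(1,2) tr_in[OF ob(3,4,1,2) eq' tf] tr_in[OF ob(1,2,1,2) obeq_refl[OF ob(1)] obeq_refl[OF ob(2)] hom(1)]
        hom(1) tr_tr[OF ob ob(1,2) eq(1,2) eq' hom(1)] tr_refl[OF ob(1,2) hom(1)]] .
  ultimately have "homeq H a b (tr H a' b' a b f') f"
    by (rule homeq_trans[OF ob(1,2) tr_in[OF ob(3,4,1,2) eq' hom(2)] tr_in[OF ob(3,4,1,2) eq' tf] hom(1)])
  then show ?thesis
    unfolding xy arr_equiv_triple using ob hom eq' by blast
qed

lemma arr_equiv_trans [trans]:
  assumes "x \<approx> y" "y \<approx> z"
  shows "x \<approx> z"
proof -
  obtain a b f a' b' f' a'' b'' f'' where xyz: "x = (a, b, f)" "y = (a', b', f')" "z = (a'', b'', f'')"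
    by (cases x, cases y, cases z)
  have ob: "a \<in> Ob H" "b \<in> Ob H" "a' \<in> Ob H" "b' \<in> Ob H" "a'' \<in> Ob H" "b'' \<in> Ob H"
    and hom: "f \<in> Hom H a b" "f' \<in> Hom H a' b'" "f'' \<in> Hom H a'' b''"
    and eq: "obeq H a a'" "obeq H b b'" "homeq H a' b' (tr H a b a' b' f) f'"
    and eq': "obeq H a' a''" "obeq H b' b''" "homeq H a'' b'' (tr H a' b' a'' b'' f') f''"
    using assms unfolding xyz arr_equiv_triple by auto
  have eq'': "obeq H a a''" "obeq H b b''"
    using ob eq eq' obeq_trans by blast+
  have tf: "tr H a b a' b' f \<in> Hom H a' b'"
    by (rule tr_in[OF ob(1-4) eq(1,2) hom(1)])
  have "homeq H a'' b'' (tr H a b a'' b'' f) (tr H a' b' a'' b'' (tr H a b a' b' f))"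
    by (rule homeq_sym[OF ob(5,6) tr_in[OF ob(3-6) eq'(1,2) tf] tr_in[OF ob(1,2,5,6) eq'' hom(1)]
          tr_tr[OF ob eq(1,2) eq'(1,2) hom(1)]])
  moreover have "homeq H a'' b'' (tr H a' b' a'' b'' (tr H a b a' b' f)) f''"
    using homeq_trans[OF ob(5,6) tr_in[OF ob(3-6) eq'(1,2) tf] tr_in[OF ob(3-6) eq'(1,2) hom(2)] hom(3)
        tr_cong[OF ob(3-6) eq'(1,2) tf hom(2) eq(3)] eq'(3)] .
  ultimately have "homeq H a'' b'' (tr H a b a'' b'' f) f''"
    by (rule homeq_trans[OF ob(5,6) tr_in[OF ob(1,2,5,6) eq'' hom(1)] tr_in[OF ob(3-6) eq'(1,2) tf] hom(3)])
  then show ?thesis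
    unfolding xyz arr_equiv_triple using ob hom eq'' by blast
qed

lemma arr_equiv_transport:
  "\<lbrakk>a \<in> Ob H; b \<in> Ob H; a' \<in> Ob H; b' \<in> Ob H; obeq H a a'; obeq H b b'; f \<in> Hom H a b\<rbrakk>
    \<Longrightarrow> (a, b, f) \<approx> (a', b', tr H a b a' b' f)"
  by (simp add: arr_equiv_triple tr_in homeq_refl)

lemma arr_equiv_homeq:
  assumes "a \<in> Ob H" "b \<in> Ob H" "f \<in> Hom H a b" "g \<in> Hom H a b" "homeq H a b f g"
  shows "(a, b, f) \<approx> (a, b, g)"
  using homeq_trans[OF assms(1,2) tr_in[OF assms(1,2,1,2) obeq_refl obeq_refl assms(3)] assms(3,4)
      tr_refl[OF assms(1-3)] assms(5)] assms
  by (simp add: arr_equiv_triple obeq_refl)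

lemma arr_equiv_hcomp_hid_left:
  "\<lbrakk>a \<in> Ob H; b \<in> Ob H; f \<in> Hom H a b\<rbrakk> \<Longrightarrow> (a, b, hcomp H a b b (hid H b) f) \<approx> (a, b, f)"
  by (rule arr_equiv_homeq) (simp_all add: hcomp_in hid_in hcomp_hid_left)

lemma arr_equiv_hcomp_hid_right:
  "\<lbrakk>a \<in> Ob H; b \<in> Ob H; f \<in> Hom H a b\<rbrakk> \<Longrightarrow> (a, b, hcomp H a a b f (hid H a)) \<approx> (a, b, f)"
  by (rule arr_equiv_homeq) (simp_all add: hcomp_in hid_in hcomp_hid_right)

lemma arr_equiv_hcomp_assoc:
  "\<lbrakk>a \<in> Ob H; b \<in> Ob H; c \<in> Ob H; d \<in> Ob H; h \<in> Hom H c d; g \<in> Hom H b c; f \<in> Hom H a b\<rbrakk>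
    \<Longrightarrow> (a, d, hcomp H a b d (hcomp H b c d h g) f) \<approx> (a, d, hcomp H a c d h (hcomp H a b c g f))"
  by (rule arr_equiv_homeq) (simp_all add: hcomp_in homeq_sym hcomp_assoc)

lemma arr_equiv_hid:
  assumes "a \<in> Ob H" "a' \<in> Ob H" "obeq H a a'"
  shows "(a, a, hid H a) \<approx> (a', a', hid H a')"
  using homeq_sym[OF assms(2,2) hid_in[OF assms(2)] tr_in[OF assms(1,1,2,2,3,3) hid_in[OF assms(1)]]
      tr_hid[OF assms]] assms
  by (simp add: arr_equiv_triple hid_in tr_in)

lemma arr_equiv_hcomp:
  assumes f: "(a, b, f) \<approx> (a', b', f')" and g: "(b, c, g) \<approx> (b', c', g')"
  shows "(a, c, hcomp H a b c g f) \<approx> (a', c', hcomp H a' b' c' g' f')"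
proof -
  have ob: "a \<in> Ob H" "b \<in> Ob H" "c \<in> Ob H" "a' \<in> Ob H" "b' \<in> Ob H" "c' \<in> Ob H"
    and hom: "f \<in> Hom H a b" "g \<in> Hom H b c" "f' \<in> Hom H a' b'" "g' \<in> Hom H b' c'"
    and eq: "obeq H a a'" "obeq H b b'" "obeq H c c'"
    and f_eq: "homeq H a' b' (tr H a b a' b' f) f'" and g_eq: "homeq H b' c' (tr H b c b' c' g) g'"
    using assms unfolding arr_equiv_triple by auto
  have "homeq H a' c' (tr H a c a' c' (hcomp H a b c g f))
      (hcomp H a' b' c' (tr H b c b' c' g) (tr H a b a' b' f))"
    by (rule tr_hcomp[OF ob eq hom(2,1)])
  moreover have "homeq H a' c' (hcomp H a' b' c' (tr H b c b' c' g) (tr H a b a' b' f))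
      (hcomp H a' b' c' g' f')"
    by (rule hcomp_cong[OF ob(4-6) tr_in[OF ob(2,3,5,6) eq(2,3) hom(2)] hom(4)
          tr_in[OF ob(1,2,4,5) eq(1,2) hom(1)] hom(3) g_eq f_eq])
  ultimately have "homeq H a' c' (tr H a c a' c' (hcomp H a b c g f)) (hcomp H a' b' c' g' f')"
    by (rule homeq_trans[OF ob(4,6) tr_in[OF ob(1,3,4,6) eq(1,3) hcomp_in[OF ob(1-3) hom(2,1)]]
          hcomp_in[OF ob(4-6) tr_in[OF ob(2,3,5,6) eq(2,3) hom(2)] tr_in[OF ob(1,2,4,5) eq(1,2) hom(1)]]
          hcomp_in[OF ob(4-6) hom(4,3)]])
  then show ?thesis
    using ob hom eq by (simp add: arr_equiv_triple hcomp_in)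
qed

definition id_transport :: "'o \<Rightarrow> 'o \<Rightarrow> 'h" where
  "id_transport b c = tr H b b b c (hid H b)"

lemma id_transport_in: "\<lbrakk>b \<in> Ob H; c \<in> Ob H; obeq H b c\<rbrakk> \<Longrightarrow> id_transport b c \<in> Hom H b c"
  unfolding id_transport_def by (simp add: tr_in hid_in obeq_refl)

lemma id_transport_equiv:
  assumes "b \<in> Ob H" "c \<in> Ob H" "obeq H b c"
  shows "(b, c, id_transport b c) \<approx> (b, b, hid H b)"
  unfolding id_transport_def
  by (rule arr_equiv_sym[OF arr_equiv_transport[OF assms(1,1,1,2) obeq_refl[OF assms(1)] assms(3)
        hid_in[OF assms(1)]]])

lemma arr_equiv_in_arr: "x \<approx> y \<Longrightarrow> x \<in> arr" "x \<approx> y \<Longrightarrow> y \<in> arr"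
  unfolding arr_equiv_def by simp_all

lemma arr_dom_in: "x \<in> arr \<Longrightarrow> fst x \<in> Ob H"
  and arr_cod_in: "x \<in> arr \<Longrightarrow> fst (snd x) \<in> Ob H"
  by (cases x, simp)+

lemma arr_equiv_dom: "x \<approx> y \<Longrightarrow> obeq H (fst x) (fst y)"
  and arr_equiv_cod: "x \<approx> y \<Longrightarrow> obeq H (fst (snd x)) (fst (snd y))"
  by (cases x, cases y, simp add: arr_equiv_triple)+

definition composable :: "'o \<times> 'o \<times> 'h \<Rightarrow> 'o \<times> 'o \<times> 'h \<Rightarrow> bool" where
  "composable x y \<longleftrightarrow> x \<in> arr \<and> y \<in> arr \<and> obeq H (fst (snd x)) (fst y)"

lemma composable_equiv:
  assumes xy: "composable x y" and "x \<approx> x'" "y \<approx> y'"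
  shows "composable x' y'"
proof -
  have arr: "x \<in> arr" "y \<in> arr" "x' \<in> arr" "y' \<in> arr"
    using assms arr_equiv_in_arr unfolding composable_def by blast+
  have "obeq H (fst (snd x')) (fst (snd x))"
    by (rule obeq_sym[OF arr_cod_in[OF arr(1)] arr_cod_in[OF arr(3)] arr_equiv_cod[OF assms(2)]])
  moreover have "obeq H (fst (snd x)) (fst y')"
    using obeq_trans[OF arr_cod_in[OF arr(1)] arr_dom_in[OF arr(2)] arr_dom_in[OF arr(4)]]
      xy arr_equiv_dom[OF assms(3)] unfolding composable_def by blast
  ultimately show ?thesis
    unfolding composable_def
    using obeq_trans[OF arr_cod_in[OF arr(3)] arr_cod_in[OF arr(1)] arr_dom_in[OF arr(4)]] arr(3,4)
    by blast
qed

definition arr_cmp :: "('o \<times> 'o \<times> 'h) \<times> ('o \<times> 'o \<times> 'h) \<Rightarrow> 'o \<times> 'o \<times> 'h" where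
  "arr_cmp = (\<lambda>((a, b, f), (c, d, g)). (a, d, hcomp H a c d g (hcomp H a b c (id_transport b c) f)))"

lemma arr_cmp_triple [simp]:
  "arr_cmp ((a, b, f), (c, d, g)) = (a, d, hcomp H a c d g (hcomp H a b c (id_transport b c) f))"
  unfolding arr_cmp_def by simp

lemma arr_cmp_dom [simp]: "fst (arr_cmp (x, y)) = fst x"
  and arr_cmp_cod [simp]: "fst (snd (arr_cmp (x, y))) = fst (snd y)"
  by (cases x, cases y, simp)+

lemma arr_cmp_cong:
  assumes "composable x y" "x \<approx> x'" "y \<approx> y'"
  shows "arr_cmp (x, y) \<approx> arr_cmp (x', y')"
proof -
  obtain a b f c d g a' b' f' c' d' g' where
    xy: "x = (a, b, f)" "y = (c, d, g)" "x' = (a', b', f')" "y' = (c', d', g')"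
    by (cases x, cases y, cases x', cases y')
  have "b \<in> Ob H" "c \<in> Ob H" "b' \<in> Ob H" "c' \<in> Ob H" "obeq H b b'"
    using assms(2,3) unfolding xy arr_equiv_triple by auto
  moreover have "obeq H b c" "obeq H b' c'"
    using composable_equiv[OF assms] assms(1) unfolding xy composable_def by auto
  ultimately have "(b, c, id_transport b c) \<approx> (b, b, hid H b)"
      and "(b, b, hid H b) \<approx> (b', b', hid H b')"
      and "(b', b', hid H b') \<approx> (b', c', id_transport b' c')"
    by (auto intro: id_transport_equiv arr_equiv_hid arr_equiv_sym)
  then have "(b, c, id_transport b c) \<approx> (b', c', id_transport b' c')"
    by (blast intro: arr_equiv_trans)
  then show ?thesis
    unfolding xy arr_cmp_triple using assms(2,3) unfolding xy by (intro arr_equiv_hcomp)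
qed

lemma arr_cmp_in: "composable x y \<Longrightarrow> arr_cmp (x, y) \<in> arr"
  using arr_cmp_cong arr_equiv_refl arr_equiv_in_arr composable_def by meson

lemma arr_cmp_hid_fst:
  assumes "composable x y" "e \<in> Ob H" "x \<approx> (e, e, hid H e)"
  shows "arr_cmp (x, y) \<approx> y"
proof -
  obtain a b f c d g where xy: "x = (a, b, f)" "y = (c, d, g)"
    by (cases x, cases y)
  have ob: "a \<in> Ob H" "b \<in> Ob H" "c \<in> Ob H" "d \<in> Ob H" and hom: "f \<in> Hom H a b" "g \<in> Hom H c d"
    and bc: "obeq H b c" and be: "obeq H b e"
    using assms unfolding xy composable_def arr_equiv_triple by auto
  have ec: "obeq H e c"
    by (rule obeq_trans[OF assms(2) ob(2,3) obeq_sym[OF ob(2) assms(2) be] bc])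
  have "(a, b, f) \<approx> (e, e, hid H e)"
    using assms(3) unfolding xy .
  also have "\<dots> \<approx> (c, c, hid H c)"
    by (rule arr_equiv_hid[OF assms(2) ob(3) ec])
  finally have f_id: "(a, b, f) \<approx> (c, c, hid H c)" .
  have "(b, c, id_transport b c) \<approx> (b, b, hid H b)"
    by (rule id_transport_equiv[OF ob(2,3) bc])
  also have "\<dots> \<approx> (c, c, hid H c)"
    by (rule arr_equiv_hid[OF ob(2,3) bc])
  finally have "(a, c, hcomp H a b c (id_transport b c) f) \<approx> (c, c, hcomp H c c c (hid H c) (hid H c))"
    using f_id by (rule arr_equiv_hcomp[rotated])
  also have "\<dots> \<approx> (c, c, hid H c)"
    by (rule arr_equiv_hcomp_hid_left[OF ob(3,3) hid_in[OF ob(3)]])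
  finally have "arr_cmp (x, y) \<approx> (c, d, hcomp H c c d g (hid H c))"
    unfolding xy arr_cmp_triple using arr_equiv_refl[of "(c, d, g)"] ob hom
    by (intro arr_equiv_hcomp) simp_all
  also have "\<dots> \<approx> y"
    unfolding xy by (rule arr_equiv_hcomp_hid_right[OF ob(3,4) hom(2)])
  finally show ?thesis .
qed

lemma arr_cmp_hid_snd:
  assumes "composable x y" "e \<in> Ob H" "y \<approx> (e, e, hid H e)"
  shows "arr_cmp (x, y) \<approx> x"
proof -
  obtain a b f c d g where xy: "x = (a, b, f)" "y = (c, d, g)"
    by (cases x, cases y)
  have ob: "a \<in> Ob H" "b \<in> Ob H" "c \<in> Ob H" "d \<in> Ob H" and hom: "f \<in> Hom H a b" "g \<in> Hom H c d"
    and bc: "obeq H b c" and ce: "obeq H c e"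
    using assms unfolding xy composable_def arr_equiv_triple by auto
  have eb: "obeq H e b"
    by (rule obeq_sym[OF ob(2) assms(2) obeq_trans[OF ob(2,3) assms(2) bc ce]])
  have "(c, d, g) \<approx> (e, e, hid H e)"
    using assms(3) unfolding xy .
  also have "\<dots> \<approx> (b, b, hid H b)"
    by (rule arr_equiv_hid[OF assms(2) ob(2) eb])
  finally have g_id: "(c, d, g) \<approx> (b, b, hid H b)" .
  have "(a, c, hcomp H a b c (id_transport b c) f) \<approx> (a, b, hcomp H a b b (hid H b) f)"
    using arr_equiv_refl[of "(a, b, f)"] id_transport_equiv[OF ob(2,3) bc] ob hom
    by (intro arr_equiv_hcomp) simp_all
  also have "\<dots> \<approx> (a, b, f)"
    by (rule arr_equiv_hcomp_hid_left[OF ob(1,2) hom(1)])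
  finally have "arr_cmp (x, y) \<approx> (a, b, hcomp H a b b (hid H b) f)"
    unfolding xy arr_cmp_triple using g_id by (rule arr_equiv_hcomp)
  also have "\<dots> \<approx> x"
    unfolding xy by (rule arr_equiv_hcomp_hid_left[OF ob(1,2) hom(1)])
  finally show ?thesis .
qed

lemma arr_cmp_assoc:
  assumes "composable x y" "composable y z"
  shows "arr_cmp (x, arr_cmp (y, z)) \<approx> arr_cmp (arr_cmp (x, y), z)"
proof -
  obtain a b f c d g e k h where xyz: "x = (a, b, f)" "y = (c, d, g)" "z = (e, k, h)"
    by (cases x, cases y, cases z)
  have ob: "a \<in> Ob H" "b \<in> Ob H" "c \<in> Ob H" "d \<in> Ob H" "e \<in> Ob H" "k \<in> Ob H"
    and hom: "f \<in> Hom H a b" "g \<in> Hom H c d" "h \<in> Hom H e k"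
    and T: "id_transport d e \<in> Hom H d e"
    using assms unfolding xyz composable_def by (auto simp: id_transport_in)
  define X where "X = hcomp H a b c (id_transport b c) f"
  have X: "X \<in> Hom H a c"
    using assms unfolding X_def xyz composable_def by (simp add: hcomp_in id_transport_in)
  let ?Y = "hcomp H c d e (id_transport d e) g"
  have Y: "?Y \<in> Hom H c e"
    by (rule hcomp_in[OF ob(3,4,5) T hom(2)])
  have "arr_cmp (x, arr_cmp (y, z)) = (a, k, hcomp H a c k (hcomp H c e k h ?Y) X)"
    unfolding xyz X_def by simp
  also have "\<dots> \<approx> (a, k, hcomp H a e k h (hcomp H a c e ?Y X))"
    by (rule arr_equiv_hcomp_assoc[OF ob(1,3,5,6) hom(3) Y X])
  also have "\<dots> \<approx> (a, k, hcomp H a e k h (hcomp H a d e (id_transport d e) (hcomp H a c d g X)))"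
    by (rule arr_equiv_hcomp[OF arr_equiv_hcomp_assoc[OF ob(1,3,4,5) T hom(2) X]])
      (simp add: arr_equiv_refl ob hom)
  also have "\<dots> = arr_cmp (arr_cmp (x, y), z)"
    unfolding xyz X_def by simp
  finally show ?thesis .
qed

lemma arr_cmp_assoc_cong:
  assumes w: "composable w1 w2" and v: "composable v1 v2" and u: "composable u1 u2"
    and z: "composable z1 z2"
    and "w1 \<approx> v1" "v2 \<approx> u1" "u2 \<approx> z2" "w2 \<approx> arr_cmp (u1, u2)" "arr_cmp (v1, v2) \<approx> z1"
  shows "arr_cmp (w1, w2) \<approx> arr_cmp (z1, z2)"
proof -
  have v1: "v1 \<in> arr" and u2: "u2 \<in> arr"
    using v u unfolding composable_def by blast+
  have v1_u: "composable v1 (arr_cmp (u1, u2))"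
    using composable_equiv[OF w] assms(5,8) by blast
  have v2_u2: "composable v2 u2"
    using composable_equiv[OF u arr_equiv_sym[OF assms(6)] arr_equiv_refl[OF u2]] .
  have v_u2: "composable (arr_cmp (v1, v2)) u2"
    using composable_equiv[OF z arr_equiv_sym[OF assms(9)] arr_equiv_sym[OF assms(7)]] .
  have "arr_cmp (w1, w2) \<approx> arr_cmp (v1, arr_cmp (u1, u2))"
    using arr_cmp_cong[OF w] assms(5,8) .
  also have "\<dots> \<approx> arr_cmp (v1, arr_cmp (v2, u2))"
    using arr_cmp_cong[OF v1_u arr_equiv_refl[OF v1] arr_cmp_cong[OF u arr_equiv_sym[OF assms(6)]
        arr_equiv_refl[OF u2]]] .
  also have "\<dots> \<approx> arr_cmp (arr_cmp (v1, v2), u2)"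
    using arr_cmp_assoc[OF v v2_u2] .
  also have "\<dots> \<approx> arr_cmp (z1, z2)"
    using arr_cmp_cong[OF v_u2 assms(9,7)] .
  finally show ?thesis .
qed

end

lemma (in hf_category) hf_to_ea_simps:
  "C0 (hf_to_ea H) = Ob H" "eq0 (hf_to_ea H) = obeq H" "C1 (hf_to_ea H) = arr" "eq1 (hf_to_ea H) = arr_eq"
  "C2 (hf_to_ea H) = {(x, y). composable x y}"
  "eq2 (hf_to_ea H) = (\<lambda>(x, y) (x', y'). arr_eq x x' \<and> arr_eq y y')"
  "ea_id (hf_to_ea H) = (\<lambda>a. (a, a, hid H a))" "ea_dom (hf_to_ea H) = fst"
  "ea_cod (hf_to_ea H) = (\<lambda>x. fst (snd x))" "ea_cmp (hf_to_ea H) = arr_cmp"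
  "ea_fst (hf_to_ea H) = fst" "ea_snd (hf_to_ea H) = snd"
  unfolding hf_to_ea_def Let_def arr_def arr_eq_def composable_def arr_cmp_def id_transport_def
  by (simp_all add: fun_eq_iff split_def)

context hf_category
begin

lemma arr_eq_iff_equiv: "x \<in> arr \<Longrightarrow> y \<in> arr \<Longrightarrow> arr_eq x y \<longleftrightarrow> x \<approx> y"
  unfolding arr_equiv_def by simp

lemma setoid_arr: "setoid arr arr_eq"
proof (rule setoidI)
  fix x y z
  assume "x \<in> arr"
  then show "arr_eq x x"
    using arr_equiv_refl unfolding arr_equiv_def by blast
  assume "y \<in> arr" "arr_eq x y"
  with \<open>x \<in> arr\<close> show "arr_eq y x"
    using arr_equiv_sym unfolding arr_equiv_def by blast
  assume "z \<in> arr" "arr_eq y z"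
  with \<open>x \<in> arr\<close> \<open>y \<in> arr\<close> \<open>arr_eq x y\<close> show "arr_eq x z"
    using arr_equiv_trans unfolding arr_equiv_def by blast
qed

lemma composable_arr: "composable x y \<Longrightarrow> x \<in> arr" "composable x y \<Longrightarrow> y \<in> arr"
  unfolding composable_def by simp_all

end

lemma (in hf_category) ea_category_hf_to_ea: "ea_category (hf_to_ea H)"
proof (rule ea_category.intro, unfold hf_to_ea_simps)
  show "setoid (Ob H) (obeq H)"
    by (rule setoid_Ob)
  show "setoid arr arr_eq"
    by (rule setoid_arr)
  show "setoid {(x, y). composable x y} (\<lambda>(x, y) (x', y'). arr_eq x x' \<and> arr_eq y y')"
    by (rule setoid_pairs[OF setoid_arr]) (auto simp: composable_def)
  show "ext_fun (Ob H) (obeq H) arr arr_eq (\<lambda>a. (a, a, hid H a))"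
    by (rule ext_funI) (simp add: hid_in, use arr_equiv_hid arr_equiv_def in blast)
  show "ext_fun arr arr_eq (Ob H) (obeq H) fst"
    by (rule ext_funI) (simp_all add: arr_dom_in arr_equiv_dom arr_eq_iff_equiv)
  show "ext_fun arr arr_eq (Ob H) (obeq H) (\<lambda>x. fst (snd x))"
    by (rule ext_funI) (simp_all add: arr_cod_in arr_equiv_cod arr_eq_iff_equiv)
  show "ext_fun {(x, y). composable x y} (\<lambda>(x, y) (x', y'). arr_eq x x' \<and> arr_eq y y') arr arr_eq fst"
    "ext_fun {(x, y). composable x y} (\<lambda>(x, y) (x', y'). arr_eq x x' \<and> arr_eq y y') arr arr_eq snd"
    by (rule ext_funI; auto simp: composable_def)+
  show "ext_fun {(x, y). composable x y} (\<lambda>(x, y) (x', y'). arr_eq x x' \<and> arr_eq y y') arr arr_eq arr_cmp"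
  proof (rule ext_funI)
    fix u
    assume "u \<in> {(x, y). composable x y}"
    then show "arr_cmp u \<in> arr"
      by (auto intro: arr_cmp_in)
  next
    fix u v
    assume "u \<in> {(x, y). composable x y}" "v \<in> {(x, y). composable x y}"
      and eq: "(\<lambda>(x, y) (x', y'). arr_eq x x' \<and> arr_eq y y') u v"
    then obtain x y x' y' where uv: "u = (x, y)" "v = (x', y')" "composable x y" "composable x' y'"
      by blast
    then have "x \<approx> x'" "y \<approx> y'"
      using eq composable_arr arr_eq_iff_equiv by auto
    then show "arr_eq (arr_cmp u) (arr_cmp v)"
      using arr_cmp_cong[OF uv(3)] unfolding uv(1,2) arr_equiv_def by blast
  qed
  show "\<And>x. x \<in> Ob H \<Longrightarrow> obeq H (fst (x, x, hid H x)) x"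
    "\<And>x. x \<in> Ob H \<Longrightarrow> obeq H (fst (snd (x, x, hid H x))) x"
    by (simp_all add: obeq_refl)
  show "\<And>u. u \<in> {(x, y). composable x y} \<Longrightarrow> obeq H (fst (arr_cmp u)) (fst (fst u))"
    "\<And>u. u \<in> {(x, y). composable x y} \<Longrightarrow> obeq H (fst (snd (arr_cmp u))) (fst (snd (snd u)))"
    by (auto simp: composable_def obeq_refl)
  show "\<And>u v. \<lbrakk>u \<in> {(x, y). composable x y}; v \<in> {(x, y). composable x y};
      arr_eq (fst u) (fst v); arr_eq (snd u) (snd v)\<rbrakk>
      \<Longrightarrow> (\<lambda>(x, y) (x', y'). arr_eq x x' \<and> arr_eq y y') u v"
    by (simp add: split_beta)
next
  fix f g
  assume "f \<in> arr" "g \<in> arr" "obeq H (fst f) (fst (snd g))"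
  then have "composable g f"
    unfolding composable_def using obeq_sym arr_dom_in arr_cod_in by blast
  moreover have "arr_eq f f" "arr_eq g g"
    using arr_equiv_refl \<open>f \<in> arr\<close> \<open>g \<in> arr\<close> unfolding arr_equiv_def by blast+
  ultimately show "\<exists>u\<in>{(x, y). composable x y}. arr_eq (snd u) f \<and> arr_eq (fst u) g"
    by (intro bexI[of _ "(g, f)"]) simp_all
next
  fix u e
  assume "u \<in> {(x, y). composable x y}" "e \<in> Ob H" and eq: "arr_eq (fst u) (e, e, hid H e)"
  then obtain x y where u: "u = (x, y)" "composable x y"
    by blast
  then have "x \<approx> (e, e, hid H e)"
    using eq \<open>e \<in> Ob H\<close> composable_arr arr_eq_iff_equiv by (simp add: hid_in)
  then show "arr_eq (arr_cmp u) (snd u)"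
    using arr_cmp_hid_fst[OF u(2) \<open>e \<in> Ob H\<close>] unfolding u(1) arr_equiv_def by simp
next
  fix u e
  assume "u \<in> {(x, y). composable x y}" "e \<in> Ob H" and eq: "arr_eq (snd u) (e, e, hid H e)"
  then obtain x y where u: "u = (x, y)" "composable x y"
    by blast
  then have "y \<approx> (e, e, hid H e)"
    using eq \<open>e \<in> Ob H\<close> composable_arr arr_eq_iff_equiv by (simp add: hid_in)
  then show "arr_eq (arr_cmp u) (fst u)"
    using arr_cmp_hid_snd[OF u(2) \<open>e \<in> Ob H\<close>] unfolding u(1) arr_equiv_def by simp
next
  fix w v u z
  assume "w \<in> {(x, y). composable x y}" "v \<in> {(x, y). composable x y}"
    "u \<in> {(x, y). composable x y}" "z \<in> {(x, y). composable x y}"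
    and eq: "arr_eq (fst w) (fst v)" "arr_eq (snd v) (fst u)" "arr_eq (snd u) (snd z)"
      "arr_eq (snd w) (arr_cmp u)" "arr_eq (arr_cmp v) (fst z)"
  then obtain w1 w2 v1 v2 u1 u2 z1 z2 where
    pairs: "w = (w1, w2)" "v = (v1, v2)" "u = (u1, u2)" "z = (z1, z2)"
    and comp: "composable w1 w2" "composable v1 v2" "composable u1 u2" "composable z1 z2"
    by blast
  have "w1 \<approx> v1" "v2 \<approx> u1" "u2 \<approx> z2" "w2 \<approx> arr_cmp (u1, u2)" "arr_cmp (v1, v2) \<approx> z1"
    using eq comp composable_arr arr_cmp_in arr_eq_iff_equiv unfolding pairs by simp_all
  then show "arr_eq (arr_cmp w) (arr_cmp z)"
    using arr_cmp_assoc_cong[OF comp] unfolding pairs arr_equiv_def by blast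
qed

theorem mainTheorem8:
  fixes C :: "('o, 'm, 'c) eacat"
    and H :: "('p, 'h) hfcat"
  shows "(is_eacat C \<longrightarrow> is_hfcat (ea_to_hf C)) \<and>
         (is_hfcat H \<longrightarrow> is_eacat (hf_to_ea H))"
  using ea_category.hf_category_ea_to_hf hf_category.ea_category_hf_to_ea
  unfolding is_eacat_iff_ea_category is_hfcat_iff_hf_category by blast

end
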